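(* Let $G$ be an $n\times n$ grid with $n$ even. Any initial configuration of $k\ge 3$ robots on distinct nodes of $G$ in which exactly one corner of the minimum enclosing square is occupied is gatherable despite at most one crash fault.
   Context: Model. The grid is the anonymous grid graph. A configuration is a map $f:V(G)\to\{0,1,2\}$ ($0$ empty, $1$ singleton, $2$ multiplicity = at least two robots). Robots are anonymous, identical, oblivious, cannot communicate, share no coordinate system, orientation or chirality, and run the same deterministic algorithm, in Look–Compute–Move cycles: snapshot of the whole configuration (global visibility, weak multiplicity detection), deterministic decision to stay or move to an adjacent node, instantaneous move. Fully asynchronous (finite but unbounded adversarial delays; every non-crashed robot activated infinitely often; moves may use outdated snapshots). At most one robot may crash at an adversarial time: it stops forever, stays visible, indistinguishable. Gatherable despite at most one crash fault: some such algorithm guarantees in every execution with at most one crash that after finite time all non-crashed robots are on one node and remain there. Minimum enclosing square (MES): the smallest square subgrid with the same geometric center as the grid containing all occupied nodes; its corners are its four corner nodes. *)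

theory Defs
  imports Main
begin

type_synonym node = "nat \<times> nat"

definition grid :: "nat \<Rightarrow> node set" where
  "grid n = {(x, y). x < n \<and> y < n}"

definition adj :: "node \<Rightarrow> node \<Rightarrow> bool" where
  "adj u v \<longleftrightarrow> \<bar>int (fst u) - int (fst v)\<bar> + \<bar>int (snd u) - int (snd v)\<bar> = 1"

text \<open>Automorphisms of the (anonymous) grid graph: these model the arbitrary local
  coordinate systems (no common origin, orientation or chirality).\<close>
definition grid_aut :: "nat \<Rightarrow> (node \<Rightarrow> node) \<Rightarrow> bool" where
  "grid_aut n \<tau> \<longleftrightarrow> bij_betw \<tau> (grid n) (grid n) \<and>
     (\<forall>u\<in>grid n. \<forall>v\<in>grid n. adj (\<tau> u) (\<tau> v) \<longleftrightarrow> adj u v)"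

text \<open>Values: 0 empty, 1 singleton, 2 multiplicity.\<close>
type_synonym config = "node \<Rightarrow> nat"

definition config_of :: "nat \<Rightarrow> nat \<Rightarrow> (nat \<Rightarrow> node) \<Rightarrow> config" where
  "config_of n k p x = (if x \<in> grid n then min 2 (card {r. r < k \<and> p r = x}) else 0)"

text \<open>The configuration as seen in a local frame \<tau> (\<tau> maps local nodes to global nodes).\<close>
definition view :: "nat \<Rightarrow> (node \<Rightarrow> node) \<Rightarrow> config \<Rightarrow> config" where
  "view n \<tau> c = (\<lambda>x. if x \<in> grid n then c (\<tau> x) else 0)"

text \<open>A deterministic algorithm maps the snapshot and the robot's own position (in its
  local frame) to its destination (in its local frame).\<close>
type_synonym algorithm = "config \<Rightarrow> node \<Rightarrow> node"

definition valid_alg :: "nat \<Rightarrow> algorithm \<Rightarrow> bool" where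
  "valid_alg n A \<longleftrightarrow> (\<forall>c v. v \<in> grid n \<longrightarrow> A c v \<in> grid n \<and> (A c v = v \<or> adj v (A c v)))"

definition target :: "nat \<Rightarrow> algorithm \<Rightarrow> (node \<Rightarrow> node) \<Rightarrow> config \<Rightarrow> node \<Rightarrow> node" where
  "target n A \<tau> c v = \<tau> (A (view n \<tau> c) (inv_into (grid n) \<tau> v))"

text \<open>State: positions of robots and pending (already computed, possibly outdated)
  destinations. One atomic event per step, performed by robot r: a Look(+Compute) if r has
  no pending destination (frame chosen adversarially), otherwise a Move to the pending
  destination.\<close>
type_synonym state = "(nat \<Rightarrow> node) \<times> (nat \<Rightarrow> node option)"

definition robot_step :: "nat \<Rightarrow> nat \<Rightarrow> algorithm \<Rightarrow> nat \<Rightarrow> state \<Rightarrow> state \<Rightarrow> bool" where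
  "robot_step n k A r s s' \<longleftrightarrow>
     (case snd s r of
        None \<Rightarrow> (\<exists>\<tau>. grid_aut n \<tau> \<and>
                  s' = (fst s, (snd s)(r := Some (target n A \<tau> (config_of n k (fst s)) (fst s r)))))
      | Some w \<Rightarrow> s' = ((fst s)(r := w), (snd s)(r := None)))"

definition execution :: "nat \<Rightarrow> nat \<Rightarrow> algorithm \<Rightarrow> (nat \<Rightarrow> node) \<Rightarrow>
    (nat \<Rightarrow> state) \<Rightarrow> (nat \<Rightarrow> nat option) \<Rightarrow> bool" where
  "execution n k A p0 s act \<longleftrightarrow>
     s 0 = (p0, (\<lambda>_. None)) \<and>
     (\<forall>t. case act t of
            None \<Rightarrow> s (Suc t) = s t
          | Some r \<Rightarrow> r < k \<and> robot_step n k A r (s t) (s (Suc t)))"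

definition crash_fair :: "nat \<Rightarrow> (nat \<Rightarrow> nat option) \<Rightarrow> nat set \<Rightarrow> nat \<Rightarrow> bool" where
  "crash_fair k act C tc \<longleftrightarrow>
     C \<subseteq> {..<k} \<and> card C \<le> 1 \<and>
     (\<forall>t\<ge>tc. \<forall>r\<in>C. act t \<noteq> Some r) \<and>
     (\<forall>r<k. r \<notin> C \<longrightarrow> (\<forall>t. \<exists>t'\<ge>t. act t' = Some r))"

definition gathered_eventually :: "nat \<Rightarrow> (nat \<Rightarrow> state) \<Rightarrow> nat set \<Rightarrow> bool" where
  "gathered_eventually k s C \<longleftrightarrow>
     (\<exists>T g. \<forall>t\<ge>T. \<forall>r<k. r \<notin> C \<longrightarrow> fst (s t) r = g)"

definition gatherable_one_crash :: "nat \<Rightarrow> nat \<Rightarrow> (nat \<Rightarrow> node) \<Rightarrow> bool" where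
  "gatherable_one_crash n k p0 \<longleftrightarrow>
     (\<exists>A. valid_alg n A \<and>
        (\<forall>s act C tc. execution n k A p0 s act \<and> crash_fair k act C tc \<longrightarrow>
            gathered_eventually k s C))"

definition csquare :: "nat \<Rightarrow> nat \<Rightarrow> node set" where
  "csquare n m = {(x, y). m \<le> x \<and> x + m < n \<and> m \<le> y \<and> y + m < n}"

definition mes_margin :: "nat \<Rightarrow> node set \<Rightarrow> nat" where
  "mes_margin n P = (GREATEST m. 2 * m < n \<and> P \<subseteq> csquare n m)"

definition mes_corners :: "nat \<Rightarrow> node set \<Rightarrow> node set" where
  "mes_corners n P = (let m = mes_margin n P; M = n - 1 - m in {(m, m), (m, M), (M, m), (M, M)})"

end

theory Submission
  imports Defs
begin

text \<open>The corner distance of a node, its Manhattan distance to the nearest corner of the grid,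
  is invariant under grid automorphisms. If the MES has margin m, its corners have corner
  distance 2m and every other node of the MES has larger corner distance, so the unique occupied
  MES corner is the unique occupied node of minimal corner distance: an anchor that every robot
  recognises in its own frame. Each robot steps towards the anchor along a shortest path that
  stays inside the MES and avoids its other three corners, so the anchor stays unique, the robot
  on it (crashed or not) never moves, and twice the distance to the anchor, plus one while no
  move is pending, decreases at every activation of a robot away from the anchor.\<close>

definition mdist :: "node \<Rightarrow> node \<Rightarrow> nat" where
  "mdist u v = nat (\<bar>int (fst u) - int (fst v)\<bar> + \<bar>int (snd u) - int (snd v)\<bar>)"

lemma adj_iff_mdist: "adj u v \<longleftrightarrow> mdist u v = 1"
  unfolding adj_def mdist_def by auto

lemma mdist_triangle: "mdist u w \<le> mdist u v + mdist v w"
  unfolding mdist_def by auto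

lemma mdist_eq_0_iff [simp]: "mdist u v = 0 \<longleftrightarrow> u = v"
  unfolding mdist_def by (cases u; cases v) auto

lemma mdist_self [simp]: "mdist u u = 0"
  by simp

lemma grid_mdist_Suc_step:
  assumes "u \<in> grid n" "v \<in> grid n" "mdist u v = Suc d"
  shows "\<exists>w\<in>grid n. adj u w \<and> mdist w v = d"
proof -
  obtain a b c e where uv: "u = (a, b)" "v = (c, e)" by (cases u; cases v)
  have bounds: "a < n" "b < n" "c < n" "e < n" using assms(1,2) uv by (auto simp: grid_def)
  have d: "nat (\<bar>int a - int c\<bar> + \<bar>int b - int e\<bar>) = Suc d"
    using assms(3) uv by (simp add: mdist_def)
  then consider "a < c" | "c < a" | "a = c" "b < e" | "a = c" "e < b" by linarith
  then show ?thesis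
  proof cases
    case 1 show ?thesis
      by (rule bexI[of _ "(Suc a, b)"]) (use 1 bounds d uv in \<open>auto simp: adj_def mdist_def grid_def\<close>)
  next
    case 2 show ?thesis
      by (rule bexI[of _ "(a - 1, b)"]) (use 2 bounds d uv in \<open>auto simp: adj_def mdist_def grid_def\<close>)
  next
    case 3 show ?thesis
      by (rule bexI[of _ "(a, Suc b)"]) (use 3 bounds d uv in \<open>auto simp: adj_def mdist_def grid_def\<close>)
  next
    case 4 show ?thesis
      by (rule bexI[of _ "(a, b - 1)"]) (use 4 bounds d uv in \<open>auto simp: adj_def mdist_def grid_def\<close>)
  qed
qed

lemma grid_aut_bij: "grid_aut n \<tau> \<Longrightarrow> bij_betw \<tau> (grid n) (grid n)"
  unfolding grid_aut_def by blast

lemma grid_aut_in: "grid_aut n \<tau> \<Longrightarrow> x \<in> grid n \<Longrightarrow> \<tau> x \<in> grid n"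
  using grid_aut_bij bij_betwE by blast

lemma grid_aut_adj:
  "grid_aut n \<tau> \<Longrightarrow> x \<in> grid n \<Longrightarrow> y \<in> grid n \<Longrightarrow> adj (\<tau> x) (\<tau> y) \<longleftrightarrow> adj x y"
  unfolding grid_aut_def by blast

lemma grid_aut_eq_iff:
  "grid_aut n \<tau> \<Longrightarrow> x \<in> grid n \<Longrightarrow> y \<in> grid n \<Longrightarrow> \<tau> x = \<tau> y \<longleftrightarrow> x = y"
  using grid_aut_bij bij_betw_imp_inj_on inj_on_eq_iff by metis

lemma grid_aut_surj: "grid_aut n \<tau> \<Longrightarrow> u \<in> grid n \<Longrightarrow> \<exists>x\<in>grid n. u = \<tau> x"
  using grid_aut_bij bij_betw_imp_surj_on by blast

lemma grid_aut_inv_into_left: "grid_aut n \<tau> \<Longrightarrow> x \<in> grid n \<Longrightarrow> inv_into (grid n) \<tau> (\<tau> x) = x"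
  using grid_aut_bij bij_betw_inv_into_left by metis

lemma grid_aut_inv_into:
  assumes "grid_aut n \<tau>"
  shows "grid_aut n (inv_into (grid n) \<tau>)"
proof -
  have bij: "bij_betw (inv_into (grid n) \<tau>) (grid n) (grid n)"
    using bij_betw_inv_into[OF grid_aut_bij[OF assms]] .
  have "adj (inv_into (grid n) \<tau> u) (inv_into (grid n) \<tau> v) \<longleftrightarrow> adj u v"
    if "u \<in> grid n" "v \<in> grid n" for u v
    using that grid_aut_surj[OF assms] grid_aut_adj[OF assms] grid_aut_inv_into_left[OF assms]
    by metis
  then show ?thesis using bij unfolding grid_aut_def by blast
qed

lemma grid_aut_mdist_le:
  assumes "grid_aut n \<tau>" "u \<in> grid n" "v \<in> grid n"
  shows "mdist (\<tau> u) (\<tau> v) \<le> mdist u v"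
  using assms(2)
proof (induction "mdist u v" arbitrary: u)
  case 0
  then show ?case by simp
next
  case (Suc d)
  then obtain w where w: "w \<in> grid n" "adj u w" "mdist w v = d"
    using grid_mdist_Suc_step assms(3) by metis
  have "mdist (\<tau> u) (\<tau> w) = 1"
    using w Suc.prems grid_aut_adj[OF assms(1)] by (simp add: adj_iff_mdist)
  moreover have "mdist (\<tau> w) (\<tau> v) \<le> d" using Suc.hyps(1) w by metis
  ultimately show ?case using mdist_triangle[of "\<tau> u" "\<tau> v" "\<tau> w"] Suc.hyps(2) by simp
qed

lemma grid_aut_mdist:
  assumes "grid_aut n \<tau>" "u \<in> grid n" "v \<in> grid n"
  shows "mdist (\<tau> u) (\<tau> v) = mdist u v"
proof (rule antisym)
  show "mdist (\<tau> u) (\<tau> v) \<le> mdist u v" using grid_aut_mdist_le assms .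
  have "mdist (inv_into (grid n) \<tau> (\<tau> u)) (inv_into (grid n) \<tau> (\<tau> v)) \<le> mdist (\<tau> u) (\<tau> v)"
    using grid_aut_mdist_le[OF grid_aut_inv_into] grid_aut_in assms by blast
  then show "mdist u v \<le> mdist (\<tau> u) (\<tau> v)" using grid_aut_inv_into_left assms by simp
qed

definition grid_corners :: "nat \<Rightarrow> node set" where
  "grid_corners n = {(0, 0), (0, n - 1), (n - 1, 0), (n - 1, n - 1)}"

lemma grid_corners_subset: "n > 0 \<Longrightarrow> grid_corners n \<subseteq> grid n"
  by (auto simp: grid_corners_def grid_def)

text \<open>This is how automorphisms recognise the corners.\<close>

lemma grid_corner_iff_diametral:
  assumes "v \<in> grid n"
  shows "v \<in> grid_corners n \<longleftrightarrow> (\<exists>u\<in>grid n. mdist u v = 2 * (n - 1))"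
proof
  obtain a b where v: "v = (a, b)" "a < n" "b < n" using assms by (auto simp: grid_def)
  {
    assume "v \<in> grid_corners n"
    then show "\<exists>u\<in>grid n. mdist u v = 2 * (n - 1)"
      using v by (intro bexI[of _ "(n - 1 - a, n - 1 - b)"]) (auto simp: grid_corners_def mdist_def grid_def)
  next
    assume "\<exists>u\<in>grid n. mdist u v = 2 * (n - 1)"
    then obtain c e where "c < n" "e < n" "nat (\<bar>int c - int a\<bar> + \<bar>int e - int b\<bar>) = 2 * (n - 1)"
      using v by (auto simp: grid_def mdist_def)
    then have "(a = 0 \<or> a = n - 1) \<and> (b = 0 \<or> b = n - 1)" using v by linarith
    then show "v \<in> grid_corners n" using v by (auto simp: grid_corners_def)
  }
qed

lemma grid_aut_grid_corners:
  assumes "grid_aut n \<tau>" "v \<in> grid_corners n" "n > 0"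
  shows "\<tau> v \<in> grid_corners n"
proof -
  have v: "v \<in> grid n" using assms grid_corners_subset by blast
  then obtain u where "u \<in> grid n" "mdist u v = 2 * (n - 1)"
    using grid_corner_iff_diametral assms(2) by blast
  then show ?thesis
    using grid_corner_iff_diametral grid_aut_in grid_aut_mdist assms(1) v by metis
qed

definition corner_dist :: "nat \<Rightarrow> node \<Rightarrow> nat" where
  "corner_dist n v = min (fst v) (n - 1 - fst v) + min (snd v) (n - 1 - snd v)"

lemma corner_dist_le_mdist: "v \<in> grid n \<Longrightarrow> c \<in> grid_corners n \<Longrightarrow> corner_dist n v \<le> mdist v c"
  by (cases v) (auto simp: corner_dist_def grid_corners_def mdist_def grid_def)

lemma corner_dist_attained: "v \<in> grid n \<Longrightarrow> \<exists>c\<in>grid_corners n. corner_dist n v = mdist v c"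
proof -
  assume "v \<in> grid n"
  then obtain x y where v: "v = (x, y)" "x < n" "y < n" by (auto simp: grid_def)
  show ?thesis
    using v
    by (intro bexI[of _ "(if x \<le> n - 1 - x then 0 else n - 1, if y \<le> n - 1 - y then 0 else n - 1)"])
       (auto simp: corner_dist_def grid_corners_def mdist_def)
qed

lemma grid_aut_corner_dist_le:
  assumes "grid_aut n \<tau>" "v \<in> grid n"
  shows "corner_dist n (\<tau> v) \<le> corner_dist n v"
proof -
  have n: "n > 0" using assms(2) by (auto simp: grid_def)
  obtain c where c: "c \<in> grid_corners n" "corner_dist n v = mdist v c"
    using corner_dist_attained assms(2) by blast
  have "corner_dist n (\<tau> v) \<le> mdist (\<tau> v) (\<tau> c)"
    using corner_dist_le_mdist grid_aut_grid_corners grid_aut_in assms c n by blast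
  also have "\<dots> = corner_dist n v"
    using grid_aut_mdist[OF assms] c grid_corners_subset[OF n] by (metis subsetD)
  finally show ?thesis .
qed

lemma grid_aut_corner_dist:
  assumes "grid_aut n \<tau>" "v \<in> grid n"
  shows "corner_dist n (\<tau> v) = corner_dist n v"
proof (rule antisym)
  show "corner_dist n (\<tau> v) \<le> corner_dist n v" using grid_aut_corner_dist_le assms .
  have "corner_dist n (inv_into (grid n) \<tau> (\<tau> v)) \<le> corner_dist n (\<tau> v)"
    using grid_aut_corner_dist_le[OF grid_aut_inv_into] grid_aut_in assms by blast
  then show "corner_dist n v \<le> corner_dist n (\<tau> v)" using grid_aut_inv_into_left assms by simp
qed

definition anchor :: "nat \<Rightarrow> config \<Rightarrow> node \<Rightarrow> bool" where
  "anchor n cfg v \<longleftrightarrow> v \<in> grid n \<and> cfg v \<noteq> 0 \<and>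
     (\<forall>u\<in>grid n. cfg u \<noteq> 0 \<and> u \<noteq> v \<longrightarrow> corner_dist n v < corner_dist n u)"

text \<open>The condition on the corner distance keeps the anchor the unique occupied node of minimal
  corner distance after the move.\<close>

definition approach :: "nat \<Rightarrow> config \<Rightarrow> node \<Rightarrow> node \<Rightarrow> bool" where
  "approach n cfg v w \<longleftrightarrow> w \<in> grid n \<and> adj v w \<and>
     (\<exists>c. anchor n cfg c \<and> mdist w c < mdist v c \<and> (w = c \<or> corner_dist n c < corner_dist n w))"

definition gather_alg :: "nat \<Rightarrow> algorithm" where
  "gather_alg n cfg v = (if \<exists>w. approach n cfg v w then SOME w. approach n cfg v w else v)"

lemma approach_gather_alg:
  assumes "approach n cfg v w"
  shows "approach n cfg v (gather_alg n cfg v)"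
proof -
  have ex: "\<exists>w. approach n cfg v w" using assms ..
  show ?thesis unfolding gather_alg_def if_P[OF ex] by (rule someI_ex[OF ex])
qed

lemma valid_alg_gather_alg: "valid_alg n (gather_alg n)"
  unfolding valid_alg_def
  using approach_gather_alg by (metis approach_def gather_alg_def)

lemma anchor_unique: "anchor n cfg c \<Longrightarrow> anchor n cfg c' \<Longrightarrow> c = c'"
  unfolding anchor_def by (metis less_asym)

lemma anchor_view:
  assumes "grid_aut n \<tau>" "x \<in> grid n"
  shows "anchor n (view n \<tau> cfg) x \<longleftrightarrow> anchor n cfg (\<tau> x)"
proof -
  have "(\<forall>u\<in>grid n. cfg (\<tau> u) \<noteq> 0 \<and> u \<noteq> x \<longrightarrow> corner_dist n x < corner_dist n u) \<longleftrightarrow>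
        (\<forall>u\<in>grid n. cfg u \<noteq> 0 \<and> u \<noteq> \<tau> x \<longrightarrow> corner_dist n (\<tau> x) < corner_dist n u)"
    using grid_aut_surj[OF assms(1)] grid_aut_in[OF assms(1)] grid_aut_eq_iff[OF assms(1)]
      grid_aut_corner_dist[OF assms(1)] assms(2)
    by metis
  then show ?thesis using assms grid_aut_in by (auto simp: anchor_def view_def)
qed

lemma approach_view:
  assumes "grid_aut n \<tau>" "x \<in> grid n" "w \<in> grid n"
  shows "approach n (view n \<tau> cfg) x w \<longleftrightarrow> approach n cfg (\<tau> x) (\<tau> w)"
proof -
  have "(\<exists>c. anchor n (view n \<tau> cfg) c \<and> mdist w c < mdist x c \<and>
            (w = c \<or> corner_dist n c < corner_dist n w)) \<longleftrightarrow>
        (\<exists>c. anchor n cfg c \<and> mdist (\<tau> w) c < mdist (\<tau> x) c \<and>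
            (\<tau> w = c \<or> corner_dist n c < corner_dist n (\<tau> w)))"
  proof
    assume "\<exists>c. anchor n (view n \<tau> cfg) c \<and> mdist w c < mdist x c \<and>
                (w = c \<or> corner_dist n c < corner_dist n w)"
    then obtain c where c: "anchor n (view n \<tau> cfg) c" "mdist w c < mdist x c"
      "w = c \<or> corner_dist n c < corner_dist n w" by blast
    then have "c \<in> grid n" by (simp add: anchor_def)
    then show "\<exists>c. anchor n cfg c \<and> mdist (\<tau> w) c < mdist (\<tau> x) c \<and>
                (\<tau> w = c \<or> corner_dist n c < corner_dist n (\<tau> w))"
      using c anchor_view grid_aut_mdist grid_aut_corner_dist assms by (intro exI[of _ "\<tau> c"]) auto
  next
    assume "\<exists>c. anchor n cfg c \<and> mdist (\<tau> w) c < mdist (\<tau> x) c \<and>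
                (\<tau> w = c \<or> corner_dist n c < corner_dist n (\<tau> w))"
    then obtain c where c: "anchor n cfg (\<tau> c)" "mdist (\<tau> w) (\<tau> c) < mdist (\<tau> x) (\<tau> c)"
      "\<tau> w = \<tau> c \<or> corner_dist n (\<tau> c) < corner_dist n (\<tau> w)" "c \<in> grid n"
      using grid_aut_surj[OF assms(1)] unfolding anchor_def by metis
    then show "\<exists>c. anchor n (view n \<tau> cfg) c \<and> mdist w c < mdist x c \<and>
                (w = c \<or> corner_dist n c < corner_dist n w)"
      using anchor_view grid_aut_mdist grid_aut_corner_dist grid_aut_eq_iff assms
      by (intro exI[of _ c]) auto
  qed
  then show ?thesis using assms grid_aut_in grid_aut_adj by (auto simp: approach_def)
qed

lemma target_gather_alg:
  assumes "grid_aut n \<tau>" "v \<in> grid n"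
  shows "(target n (gather_alg n) \<tau> cfg v = v \<and> (\<nexists>w. approach n cfg v w))
         \<or> approach n cfg v (target n (gather_alg n) \<tau> cfg v)"
proof -
  define x where "x = inv_into (grid n) \<tau> v"
  have x: "x \<in> grid n" "\<tau> x = v"
    using grid_aut_surj grid_aut_inv_into_left assms unfolding x_def by metis+
  have target: "target n (gather_alg n) \<tau> cfg v = \<tau> (gather_alg n (view n \<tau> cfg) x)"
    unfolding target_def x_def ..
  have approach_local: "approach n cfg v w \<longleftrightarrow> (\<exists>y\<in>grid n. w = \<tau> y \<and> approach n (view n \<tau> cfg) x y)" for w
    using approach_view[OF assms(1) x(1)] grid_aut_surj[OF assms(1)] x(2) approach_def by metis
  show ?thesis
  proof (cases "\<exists>y. approach n (view n \<tau> cfg) x y")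
    case True
    then have "approach n (view n \<tau> cfg) x (gather_alg n (view n \<tau> cfg) x)"
      using approach_gather_alg by blast
    then show ?thesis using approach_local target approach_def by blast
  next
    case False
    then have "target n (gather_alg n) \<tau> cfg v = v" using target x(2) by (simp add: gather_alg_def)
    moreover have "\<nexists>w. approach n cfg v w" using False approach_local by blast
    ultimately show ?thesis by blast
  qed
qed

definition square_corners :: "nat \<Rightarrow> nat \<Rightarrow> node set" where
  "square_corners n m = {(m, m), (m, n - 1 - m), (n - 1 - m, m), (n - 1 - m, n - 1 - m)}"

lemma mes_corners_eq_square_corners: "mes_corners n P = square_corners n (mes_margin n P)"
  by (simp add: mes_corners_def square_corners_def Let_def)

lemma mes_margin_encloses:
  assumes "P \<subseteq> grid n" "n > 0"
  shows "2 * mes_margin n P < n \<and> P \<subseteq> csquare n (mes_margin n P)"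
proof -
  have "grid n = csquare n 0" by (auto simp: grid_def csquare_def)
  then have "2 * 0 < n \<and> P \<subseteq> csquare n 0" using assms by simp
  then show ?thesis unfolding mes_margin_def by (rule GreatestI_nat[where b = n]) auto
qed

lemma csquare_subset_grid: "csquare n m \<subseteq> grid n"
  by (auto simp: csquare_def grid_def)

lemma square_corners_in_csquare: "2 * m < n \<Longrightarrow> c \<in> square_corners n m \<Longrightarrow> c \<in> csquare n m"
  by (auto simp: square_corners_def csquare_def)

lemma corner_dist_square_corner: "2 * m < n \<Longrightarrow> c \<in> square_corners n m \<Longrightarrow> corner_dist n c = 2 * m"
  by (auto simp: square_corners_def corner_dist_def)

lemma corner_dist_csquare_gt:
  "v \<in> csquare n m \<Longrightarrow> v \<notin> square_corners n m \<Longrightarrow> 2 * m < corner_dist n v"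
  by (cases v) (auto simp: square_corners_def csquare_def corner_dist_def)

lemma csquare_closer_step:
  assumes "v \<in> csquare n m" "c \<in> csquare n m" "adj v w" "mdist w c < mdist v c"
  shows "w \<in> csquare n m"
  using assms by (cases v; cases w; cases c) (auto simp: csquare_def adj_def mdist_def)

text \<open>Move along a coordinate in which v differs from the corner c; if that step would land on
  another corner, v lies on a side of the square and the other coordinate works.\<close>

lemma csquare_step_avoiding_corners:
  assumes m: "2 * m < n" and v: "v \<in> csquare n m" and c: "c \<in> square_corners n m"
    and vc: "v \<noteq> c" and nc: "v \<notin> square_corners n m"
  shows "\<exists>w. adj v w \<and> mdist w c < mdist v c \<and> (w = c \<or> w \<notin> square_corners n m)"
proof -
  obtain x y cx cy where vxy: "v = (x, y)" and cxy: "c = (cx, cy)" by (cases v; cases c)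
  define M where "M = n - 1 - m"
  have corner_iff: "(a, b) \<in> square_corners n m \<longleftrightarrow> (a = m \<or> a = M) \<and> (b = m \<or> b = M)" for a b
    by (auto simp: square_corners_def M_def)
  have cx: "cx = m \<or> cx = M" and cy: "cy = m \<or> cy = M" using c cxy corner_iff by auto
  have bounds: "m \<le> x" "x \<le> M" "m \<le> y" "y \<le> M" "m \<le> M"
    using v vxy m by (auto simp: csquare_def M_def)
  define sx where "sx = (if x < cx then x + 1 else x - 1)"
  define sy where "sy = (if y < cy then y + 1 else y - 1)"
  have step_x: "x \<noteq> cx \<Longrightarrow> adj v (sx, y) \<and> mdist (sx, y) c < mdist v c"
    using cx bounds unfolding sx_def vxy cxy adj_def mdist_def by auto
  have step_y: "y \<noteq> cy \<Longrightarrow> adj v (x, sy) \<and> mdist (x, sy) c < mdist v c"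
    using cy bounds unfolding sy_def vxy cxy adj_def mdist_def by auto
  have v_side: "\<not> ((x = m \<or> x = M) \<and> (y = m \<or> y = M))" using nc corner_iff vxy by simp
  show ?thesis
  proof (cases "x \<noteq> cx \<and> ((sx = cx \<and> y = cy) \<or> \<not> ((sx = m \<or> sx = M) \<and> (y = m \<or> y = M)))")
    case True
    then show ?thesis using step_x corner_iff cxy by (intro exI[of _ "(sx, y)"]) auto
  next
    case False
    have y: "y \<noteq> cy" using False v_side cx cy bounds vc vxy cxy unfolding sx_def by auto
    have "(sy = cy \<and> x = cx) \<or> \<not> ((x = m \<or> x = M) \<and> (sy = m \<or> sy = M))"
      using False y v_side cx cy bounds unfolding sx_def sy_def by auto
    then show ?thesis using step_y[OF y] corner_iff cxy by (intro exI[of _ "(x, sy)"]) auto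
  qed
qed

lemma csquare_step_to_corner:
  assumes m: "2 * m < n" and v: "v \<in> csquare n m" and c: "c \<in> square_corners n m"
    and vc: "v \<noteq> c" and v_inner: "2 * m < corner_dist n v"
  shows "\<exists>w\<in>csquare n m. adj v w \<and> mdist w c < mdist v c \<and> (w = c \<or> 2 * m < corner_dist n w)"
proof -
  have "v \<notin> square_corners n m" using v_inner corner_dist_square_corner m by fastforce
  then obtain w where w: "adj v w" "mdist w c < mdist v c" "w = c \<or> w \<notin> square_corners n m"
    using csquare_step_avoiding_corners assms by blast
  have "w \<in> csquare n m"
    using csquare_closer_step[OF v square_corners_in_csquare[OF m c] w(1,2)] .
  then show ?thesis using w corner_dist_csquare_gt by blast
qed

definition admissible :: "nat \<Rightarrow> nat \<Rightarrow> node \<Rightarrow> node \<Rightarrow> bool" where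
  "admissible n m c0 v \<longleftrightarrow> v \<in> csquare n m \<and> (v = c0 \<or> 2 * m < corner_dist n v)"

text \<open>Since the anchor never moves, a destination computed from an outdated snapshot is still a
  step towards it; this is what makes asynchrony harmless.\<close>

definition gather_inv :: "nat \<Rightarrow> nat \<Rightarrow> nat \<Rightarrow> node \<Rightarrow> nat \<Rightarrow> state \<Rightarrow> bool" where
  "gather_inv n k m c0 r0 st \<longleftrightarrow> fst st r0 = c0 \<and>
     (\<forall>r<k. admissible n m c0 (fst st r) \<and>
        (\<forall>w. snd st r = Some w \<longrightarrow> admissible n m c0 w \<and>
           (if fst st r = c0 then w = c0 else mdist w c0 < mdist (fst st r) c0)))"

definition potential :: "node \<Rightarrow> nat \<Rightarrow> state \<Rightarrow> nat" where
  "potential c0 r st =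
     (if fst st r = c0 then 0 else 2 * mdist (fst st r) c0 + (if snd st r = None then 1 else 0))"

lemma robot_step_other:
  assumes "robot_step n k A r' st st'" "r' \<noteq> r"
  shows "fst st' r = fst st r \<and> snd st' r = snd st r"
  using assms unfolding robot_step_def by (auto split: option.splits)

context
  fixes n k m :: nat and c0 :: node and r0 :: nat
  assumes margin: "2 * m < n" and c0_corner: "c0 \<in> square_corners n m" and r0: "r0 < k"
begin

lemma corner_dist_c0: "corner_dist n c0 = 2 * m"
  using corner_dist_square_corner[OF margin c0_corner] .

lemma anchor_of_gather_inv:
  assumes inv: "gather_inv n k m c0 r0 st"
  shows "anchor n (config_of n k (fst st)) c0"
proof -
  have occupied: "config_of n k (fst st) u \<noteq> 0 \<longleftrightarrow> (\<exists>r<k. fst st r = u)" if "u \<in> grid n" for u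
    using that by (auto simp: config_of_def card_gt_0_iff)
  have "c0 \<in> grid n"
    using square_corners_in_csquare[OF margin c0_corner] csquare_subset_grid by blast
  moreover have "fst st r = c0 \<or> 2 * m < corner_dist n (fst st r)" if "r < k" for r
    using inv that unfolding gather_inv_def admissible_def by blast
  ultimately show ?thesis
    using inv r0 occupied corner_dist_c0 unfolding anchor_def gather_inv_def by metis
qed

text \<open>Only the anchor c0 can be the anchor in an approaching move, and c0 itself has none.\<close>

lemma target_of_gather_inv:
  assumes inv: "gather_inv n k m c0 r0 st" and r: "r < k" and \<tau>: "grid_aut n \<tau>"
  defines "w \<equiv> target n (gather_alg n) \<tau> (config_of n k (fst st)) (fst st r)"
  shows "admissible n m c0 w \<and> (if fst st r = c0 then w = c0 else mdist w c0 < mdist (fst st r) c0)"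
proof -
  let ?cfg = "config_of n k (fst st)" and ?v = "fst st r"
  have v: "admissible n m c0 ?v" using inv r unfolding gather_inv_def by blast
  then have v_grid: "?v \<in> grid n" using csquare_subset_grid admissible_def by blast
  have approach_c0: "approach n ?cfg ?v u \<longleftrightarrow>
      u \<in> grid n \<and> adj ?v u \<and> mdist u c0 < mdist ?v c0 \<and> (u = c0 \<or> 2 * m < corner_dist n u)" for u
    using anchor_unique anchor_of_gather_inv[OF inv] corner_dist_c0 unfolding approach_def by metis
  have w: "(w = ?v \<and> (\<nexists>u. approach n ?cfg ?v u)) \<or> approach n ?cfg ?v w"
    using target_gather_alg[OF \<tau> v_grid] unfolding w_def .
  show ?thesis
  proof (cases "?v = c0")
    case True
    then have "\<nexists>u. approach n ?cfg ?v u" using approach_c0 by simp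
    then have "w = ?v" using w by blast
    then show ?thesis using v True by simp
  next
    case False
    then obtain u where "u \<in> csquare n m" "adj ?v u" "mdist u c0 < mdist ?v c0"
      "u = c0 \<or> 2 * m < corner_dist n u"
      using csquare_step_to_corner[OF margin _ c0_corner] v unfolding admissible_def by blast
    then have "approach n ?cfg ?v w"
      using w approach_c0 csquare_subset_grid by blast
    then have "adj ?v w" "mdist w c0 < mdist ?v c0" "w = c0 \<or> 2 * m < corner_dist n w"
      using approach_c0 by auto
    moreover have "w \<in> csquare n m"
      using csquare_closer_step square_corners_in_csquare[OF margin c0_corner] v calculation(1,2)
      unfolding admissible_def by blast
    ultimately show ?thesis using False unfolding admissible_def by simp
  qed
qed

lemma robot_step_gather_inv:
  assumes inv: "gather_inv n k m c0 r0 st" and r: "r < k"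
    and step: "robot_step n k (gather_alg n) r st st'"
  shows "gather_inv n k m c0 r0 st'"
proof (cases "snd st r")
  case None
  then obtain \<tau> where \<tau>: "grid_aut n \<tau>" and
    st': "st' = (fst st, (snd st)(r := Some (target n (gather_alg n) \<tau> (config_of n k (fst st)) (fst st r))))"
    using step unfolding robot_step_def by auto
  then show ?thesis
    using inv target_of_gather_inv[OF inv r \<tau>] r unfolding gather_inv_def st' by auto
next
  case (Some w)
  then have st': "st' = ((fst st)(r := w), (snd st)(r := None))"
    using step unfolding robot_step_def by auto
  have w: "admissible n m c0 w" "if fst st r = c0 then w = c0 else mdist w c0 < mdist (fst st r) c0"
    using inv r Some unfolding gather_inv_def by blast+
  then have "r = r0 \<Longrightarrow> w = c0" using inv unfolding gather_inv_def by auto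
  then show ?thesis using inv r w(1) unfolding gather_inv_def st' by auto
qed

lemma robot_step_potential:
  assumes inv: "gather_inv n k m c0 r0 st" and r: "r < k"
    and step: "robot_step n k (gather_alg n) r st st'"
  shows "potential c0 r st' \<le> potential c0 r st \<and>
    (0 < potential c0 r st \<longrightarrow> potential c0 r st' < potential c0 r st)"
proof (cases "snd st r")
  case None
  then have "fst st' = fst st" "snd st' r \<noteq> None"
    using step unfolding robot_step_def by auto
  then show ?thesis using None unfolding potential_def by auto
next
  case (Some w)
  then have "st' = ((fst st)(r := w), (snd st)(r := None))" using step unfolding robot_step_def by auto
  moreover have "if fst st r = c0 then w = c0 else mdist w c0 < mdist (fst st r) c0"
    using inv r Some unfolding gather_inv_def by blast
  ultimately show ?thesis using Some unfolding potential_def by (auto split: if_splits)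
qed

end

lemma execution_Suc_cases:
  assumes "execution n k A p0 s act"
  obtains "act t = None" "s (Suc t) = s t"
    | r where "act t = Some r" "r < k" "robot_step n k A r (s t) (s (Suc t))"
proof -
  have "case act t of None \<Rightarrow> s (Suc t) = s t
          | Some r \<Rightarrow> r < k \<and> robot_step n k A r (s t) (s (Suc t))"
    using assms unfolding execution_def by blast
  then show ?thesis using that by (cases "act t") auto
qed

lemma execution_invariant:
  assumes exec: "execution n k A p0 s act"
    and init: "I (p0, \<lambda>_. None)"
    and step: "\<And>r st st'. I st \<Longrightarrow> r < k \<Longrightarrow> robot_step n k A r st st' \<Longrightarrow> I st'"
  shows "I (s t)"
proof (induction t)
  case 0
  then show ?case using init exec unfolding execution_def by simp
next
  case (Suc t)
  then show ?case using step by (cases rule: execution_Suc_cases[OF exec, of t]) auto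
qed

lemma nat_seq_eventually_zero:
  fixes f :: "nat \<Rightarrow> nat"
  assumes nonincr: "\<And>t. f (Suc t) \<le> f t"
    and decr: "\<And>t. P t \<Longrightarrow> 0 < f t \<Longrightarrow> f (Suc t) < f t"
    and often: "\<And>t. \<exists>t'\<ge>t. P t'"
  shows "eventually (\<lambda>t. f t = 0) sequentially"
proof -
  have antimono: "f t' \<le> f t" if "t \<le> t'" for t t'
    using that by (induction t' rule: dec_induct) (auto intro: order_trans nonincr)
  obtain T where min: "\<And>t. f T \<le> f t" using ex_has_least_nat[of "\<lambda>_. True" 0 f] by blast
  obtain t where t: "T \<le> t" "P t" using often by blast
  have "f t = 0"
    using decr[OF t(2)] antimono[OF t(1)] min[of "Suc t"] by linarith
  then have "\<forall>t'\<ge>t. f t' = 0" using antimono by fastforce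
  then show ?thesis unfolding eventually_sequentially by blast
qed

lemma execution_reaches_anchor:
  assumes margin: "2 * m < n" and c0: "c0 \<in> square_corners n m" and r0: "r0 < k"
    and exec: "execution n k (gather_alg n) p0 s act"
    and inv: "\<And>t. gather_inv n k m c0 r0 (s t)"
    and r: "r < k" and often: "\<And>t. \<exists>t'\<ge>t. act t' = Some r"
  shows "eventually (\<lambda>t. fst (s t) r = c0) sequentially"
proof -
  have step: "potential c0 r (s (Suc t)) \<le> potential c0 r (s t) \<and>
        (act t = Some r \<and> 0 < potential c0 r (s t) \<longrightarrow> potential c0 r (s (Suc t)) < potential c0 r (s t))"
    for t
  proof (cases rule: execution_Suc_cases[OF exec, of t])
    case 1
    then show ?thesis by simp
  next
    case (2 r')
    then show ?thesis
      using robot_step_potential[OF margin c0 r0 inv r] robot_step_other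
      unfolding potential_def by (cases "r' = r") auto
  qed
  have "eventually (\<lambda>t. potential c0 r (s t) = 0) sequentially"
    using nat_seq_eventually_zero[where f = "\<lambda>t. potential c0 r (s t)" and P = "\<lambda>t. act t = Some r"]
      step often by blast
  then show ?thesis by eventually_elim (simp add: potential_def split: if_splits)
qed

lemma gather_inv_initial:
  assumes enclosed: "p0 ` {..<k} \<subseteq> csquare n m"
    and c0: "square_corners n m \<inter> p0 ` {..<k} = {c0}" and r0: "r0 < k" "p0 r0 = c0"
  shows "gather_inv n k m c0 r0 (p0, \<lambda>_. None)"
proof -
  have "admissible n m c0 (p0 r)" if "r < k" for r
  proof -
    have "p0 r \<in> csquare n m" "p0 r = c0 \<or> p0 r \<notin> square_corners n m"
      using that enclosed c0 by auto
    then show ?thesis using corner_dist_csquare_gt unfolding admissible_def by blast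
  qed
  then show ?thesis using r0 unfolding gather_inv_def by simp
qed

lemma gather_alg_gathers:
  assumes margin: "2 * m < n" and enclosed: "p0 ` {..<k} \<subseteq> csquare n m"
    and c0: "square_corners n m \<inter> p0 ` {..<k} = {c0}" and r0: "r0 < k" "p0 r0 = c0"
    and exec: "execution n k (gather_alg n) p0 s act" and fair: "crash_fair k act C tc"
  shows "gathered_eventually k s C"
proof -
  have c0_corner: "c0 \<in> square_corners n m" using c0 by (metis Int_iff insertI1)
  have inv: "gather_inv n k m c0 r0 (s t)" for t
    using execution_invariant[where I = "gather_inv n k m c0 r0", OF exec
        gather_inv_initial[OF enclosed c0 r0] robot_step_gather_inv[OF margin c0_corner r0(1)]] .
  have "\<forall>r\<in>{r. r < k \<and> r \<notin> C}. eventually (\<lambda>t. fst (s t) r = c0) sequentially"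
    using execution_reaches_anchor[OF margin c0_corner r0(1) exec inv] fair
    unfolding crash_fair_def by blast
  then have "eventually (\<lambda>t. \<forall>r\<in>{r. r < k \<and> r \<notin> C}. fst (s t) r = c0) sequentially"
    by (intro eventually_ball_finite) auto
  then show ?thesis unfolding gathered_eventually_def eventually_sequentially by blast
qed

theorem theorem4:
  fixes n k :: nat and p0 :: "nat \<Rightarrow> node"
  assumes "even n"
    and "k \<ge> 3"
    and "\<forall>r<k. p0 r \<in> grid n"
    and "inj_on p0 {..<k}"
    and "card (mes_corners n (p0 ` {..<k}) \<inter> p0 ` {..<k}) = 1"
  shows "gatherable_one_crash n k p0"
proof -
  let ?P = "p0 ` {..<k}"
  define m where "m = mes_margin n ?P"
  have "p0 0 \<in> grid n" using assms(2,3) by simp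
  then have "n > 0" by (auto simp: grid_def)
  moreover have "?P \<subseteq> grid n" using assms(3) by auto
  ultimately have margin: "2 * m < n" and enclosed: "?P \<subseteq> csquare n m"
    using mes_margin_encloses unfolding m_def by auto
  have "card (square_corners n m \<inter> ?P) = 1"
    using assms(5) unfolding m_def mes_corners_eq_square_corners .
  then obtain c0 where c0: "square_corners n m \<inter> ?P = {c0}" by (rule card_1_singletonE)
  then have "c0 \<in> ?P" by (metis Int_iff insertI1)
  then obtain r0 where r0: "r0 < k" "p0 r0 = c0" by auto
  show ?thesis
    unfolding gatherable_one_crash_def
    using valid_alg_gather_alg gather_alg_gathers[OF margin enclosed c0 r0] by blast
qed

end
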